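(* For each $\varepsilon\in(0,1]$ let $f_\varepsilon\in L^1(\mathbb{R}^d)$, and let $f\in L^1(\mathbb{R}^d)$. Assume all $f_\varepsilon$ and $f$ are nonnegative, continuous, radial and radially nonincreasing, and that $f_\varepsilon\to f$ weakly as $\varepsilon\to0$ (as measures on $\mathbb{R}^d$). Then $f_\varepsilon(x)\to f(x)$ as $\varepsilon\to0$ for every $x\ne0$. *)

theory Defs
  imports "HOL-Analysis.Analysis"
begin

definition radial :: "('a::real_normed_vector \<Rightarrow> real) \<Rightarrow> bool" where
  "radial f \<longleftrightarrow> (\<forall>x y. norm x = norm y \<longrightarrow> f x = f y)"

definition radially_nonincreasing :: "('a::real_normed_vector \<Rightarrow> real) \<Rightarrow> bool" where
  "radially_nonincreasing f \<longleftrightarrow> (\<forall>x y. norm x \<le> norm y \<longrightarrow> f y \<le> f x)"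

definition weak_conv_density ::
  "(real \<Rightarrow> 'a::euclidean_space \<Rightarrow> real) \<Rightarrow> ('a \<Rightarrow> real) \<Rightarrow> bool" where
  "weak_conv_density F f \<longleftrightarrow>
     (\<forall>g::'a \<Rightarrow> real. continuous_on UNIV g \<and> bounded (range g) \<longrightarrow>
        ((\<lambda>e. \<integral>x. F e x * g x \<partial>lborel) \<longlongrightarrow> (\<integral>x. f x * g x \<partial>lborel)) (at_right 0))"

end

theory Submission
  imports Defs
begin

text \<open>Test the weak convergence against a continuous tent function g of \<open>|y|\<close> supported in a
  thin shell just inside the sphere \<open>|y| = |x|\<close>. On that shell radial monotonicity gives
  \<open>F\<^sub>\<epsilon>(x) \<le> F\<^sub>\<epsilon>(y)\<close> and \<open>f(y) \<le> f(z)\<close> for a point z on the inner sphere, so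
  \<open>F\<^sub>\<epsilon>(x) \<integral>g \<le> \<integral>F\<^sub>\<epsilon> g\<close>, where the right side tends to \<open>\<integral>f g \<le> f(z) \<integral>g\<close>; hence
  \<open>limsup F\<^sub>\<epsilon>(x) \<le> f(z)\<close>. A shell just outside gives \<open>liminf F\<^sub>\<epsilon>(x) \<ge> f(z')\<close>, and
  continuity of f lets z and z' tend to x.\<close>

definition shell_bump :: "real \<Rightarrow> real \<Rightarrow> 'a::real_normed_vector \<Rightarrow> real" where
  "shell_bump a b y = max 0 (min (norm y - a) (b - norm y))"

lemma shell_bump_nonneg: "0 \<le> shell_bump a b y"
  by (simp add: shell_bump_def)

lemma shell_bump_neq_zeroD: "shell_bump a b y \<noteq> 0 \<Longrightarrow> a < norm y \<and> norm y < b"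
  by (auto simp: shell_bump_def max_def min_def split: if_splits)

lemma continuous_on_shell_bump: "continuous_on UNIV (shell_bump a b)"
  unfolding shell_bump_def by (intro continuous_intros)

lemma bounded_range_shell_bump: "bounded (range (shell_bump a b :: 'a::real_normed_vector \<Rightarrow> real))"
proof -
  have "\<bar>shell_bump a b y\<bar> \<le> \<bar>b\<bar>" for y :: 'a
    using norm_ge_zero[of y] unfolding shell_bump_def by linarith
  then show ?thesis
    unfolding bounded_iff by auto
qed

lemma integrable_shell_bump: "integrable lborel (shell_bump a b :: 'a::euclidean_space \<Rightarrow> real)"
proof -
  have "shell_bump a b = (\<lambda>y::'a. indicator (cball 0 b) y *\<^sub>R shell_bump a b y)"
    using shell_bump_neq_zeroD by (force simp: indicator_def)
  then show ?thesis
    by (metis borel_integrable_compact compact_cball continuous_on_shell_bump continuous_on_subset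
        subset_UNIV)
qed

lemma integral_shell_bump_pos:
  assumes "0 \<le> a" "a < b"
  shows "0 < integral\<^sup>L lborel (shell_bump a b :: 'a::euclidean_space \<Rightarrow> real)"
proof -
  obtain u :: 'a where u: "u \<in> Basis"
    using nonempty_Basis by blast
  define \<rho> where "\<rho> = (b - a) / 4"
  define z where "z = ((a + b) / 2) *\<^sub>R u"
  have \<rho>: "0 < \<rho>"
    using assms by (simp add: \<rho>_def)
  have norm_z: "norm z = (a + b) / 2"
    using u assms by (simp add: z_def)
  have below: "\<rho> * indicator (cball z \<rho>) y \<le> shell_bump a b y" for y
  proof (cases "y \<in> cball z \<rho>")
    case True
    then have "\<bar>norm y - norm z\<bar> \<le> \<rho>"
      using norm_triangle_ineq3[of y z] by (simp add: dist_norm norm_minus_commute)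
    then show ?thesis
      using True by (auto simp: shell_bump_def norm_z \<rho>_def abs_le_iff max_def min_def field_simps)
  qed (simp add: shell_bump_nonneg)
  have "0 < \<rho> * measure lborel (cball z \<rho>)"
    using \<rho> content_ball_pos[OF \<rho>, of z] content_cball_conv_ball[of z \<rho>] by simp
  also have "\<dots> = integral\<^sup>L lborel (\<lambda>y. \<rho> * indicator (cball z \<rho>) y)"
    by simp
  also have "\<dots> \<le> integral\<^sup>L lborel (shell_bump a b :: 'a \<Rightarrow> real)"
    using below integrable_shell_bump
    by (intro integral_mono integrable_mult_right integrable_real_indicator)
      (use emeasure_compact_finite[OF compact_cball, of z \<rho>] in auto)
  finally show ?thesis .
qed

lemma integrable_mult_bounded:
  fixes \<phi> g :: "'a \<Rightarrow> real"
  assumes "integrable M \<phi>" "g \<in> borel_measurable M" "bounded (range g)"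
  shows "integrable M (\<lambda>y. \<phi> y * g y)"
proof -
  obtain B where B: "\<And>y. \<bar>g y\<bar> \<le> B"
    using assms(3) by (auto simp: bounded_iff)
  show ?thesis
  proof (rule Bochner_Integration.integrable_bound)
    show "integrable M (\<lambda>y. B * \<phi> y)"
      using assms(1) by simp
    show "(\<lambda>y. \<phi> y * g y) \<in> borel_measurable M"
      using assms(1,2) by measurable
    show "AE y in M. norm (\<phi> y * g y) \<le> norm (B * \<phi> y)"
    proof (rule AE_I2)
      fix y
      have "\<bar>\<phi> y\<bar> * \<bar>g y\<bar> \<le> \<bar>\<phi> y\<bar> * \<bar>B\<bar>"
        using B[of y] by (intro mult_left_mono) auto
      then show "norm (\<phi> y * g y) \<le> norm (B * \<phi> y)"
        by (simp add: abs_mult mult.commute)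
    qed
  qed
qed

lemma integrable_mult_shell_bump:
  fixes \<phi> :: "'a::euclidean_space \<Rightarrow> real"
  assumes "integrable lborel \<phi>"
  shows "integrable lborel (\<lambda>y. \<phi> y * shell_bump a b y)"
  using assms borel_measurable_continuous_onI[OF continuous_on_shell_bump]
  by (intro integrable_mult_bounded bounded_range_shell_bump) simp_all

lemma integral_mult_ge_on_support:
  fixes \<phi> g :: "'a \<Rightarrow> real"
  assumes "integrable M g" "integrable M (\<lambda>y. \<phi> y * g y)"
    and "\<And>y. 0 \<le> g y" "\<And>y. g y \<noteq> 0 \<Longrightarrow> c \<le> \<phi> y"
  shows "c * integral\<^sup>L M g \<le> integral\<^sup>L M (\<lambda>y. \<phi> y * g y)"
proof -
  have "c * g y \<le> \<phi> y * g y" for y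
    using assms(3,4)[of y] by (cases "g y = 0") (auto intro: mult_right_mono)
  then show ?thesis
    using assms(1,2) by (subst integral_mult_right_zero[symmetric]) (intro integral_mono; simp)
qed

lemma integral_mult_le_on_support:
  fixes \<phi> g :: "'a \<Rightarrow> real"
  assumes "integrable M g" "integrable M (\<lambda>y. \<phi> y * g y)"
    and "\<And>y. 0 \<le> g y" "\<And>y. g y \<noteq> 0 \<Longrightarrow> \<phi> y \<le> c"
  shows "integral\<^sup>L M (\<lambda>y. \<phi> y * g y) \<le> c * integral\<^sup>L M g"
proof -
  have "\<phi> y * g y \<le> c * g y" for y
    using assms(3,4)[of y] by (cases "g y = 0") (auto intro: mult_right_mono)
  then show ?thesis
    using assms(1,2) by (subst integral_mult_right_zero[symmetric]) (intro integral_mono; simp)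
qed

lemma weak_conv_density_test_shell_bump:
  assumes "weak_conv_density F f"
  shows "((\<lambda>e. \<integral>y. F e y * shell_bump a b y \<partial>lborel)
           \<longlongrightarrow> (\<integral>y. f y * shell_bump a b y \<partial>lborel)) (at_right 0)"
  using assms continuous_on_shell_bump bounded_range_shell_bump
  unfolding weak_conv_density_def by blast

lemma weak_conv_density_eventually_less:
  fixes F :: "real \<Rightarrow> 'a::euclidean_space \<Rightarrow> real"
  assumes conv: "weak_conv_density F f"
    and F: "\<forall>\<^sub>F e in at_right 0. integrable lborel (F e) \<and> radially_nonincreasing (F e)"
    and f: "integrable lborel f" "radially_nonincreasing f"
    and z: "norm z < norm x" "f z < c"
  shows "\<forall>\<^sub>F e in at_right 0. F e x < c"
proof -
  define g :: "'a \<Rightarrow> real" where "g = shell_bump (norm z) (norm x)"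
  define G where "G = integral\<^sup>L lborel g"
  have G: "0 < G"
    unfolding G_def g_def using z by (intro integral_shell_bump_pos) auto
  have "(\<integral>y. f y * g y \<partial>lborel) \<le> f z * G"
    unfolding G_def g_def using f z
    by (intro integral_mult_le_on_support integrable_shell_bump integrable_mult_shell_bump
        shell_bump_nonneg) (auto dest: shell_bump_neq_zeroD simp: radially_nonincreasing_def)
  also have "\<dots> < c * G"
    using z G by simp
  finally have "\<forall>\<^sub>F e in at_right 0. (\<integral>y. F e y * g y \<partial>lborel) < c * G"
    unfolding g_def by (rule order_tendstoD(2)[OF weak_conv_density_test_shell_bump[OF conv]])
  then show ?thesis
    using F
  proof eventually_elim
    case (elim e)
    have "F e x * G \<le> (\<integral>y. F e y * g y \<partial>lborel)"
      unfolding G_def g_def using elim(2)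
      by (intro integral_mult_ge_on_support integrable_shell_bump integrable_mult_shell_bump
          shell_bump_nonneg) (auto dest: shell_bump_neq_zeroD simp: radially_nonincreasing_def)
    with elim(1) have "F e x * G < c * G"
      by linarith
    with G show ?case
      by simp
  qed
qed

lemma weak_conv_density_eventually_greater:
  fixes F :: "real \<Rightarrow> 'a::euclidean_space \<Rightarrow> real"
  assumes conv: "weak_conv_density F f"
    and F: "\<forall>\<^sub>F e in at_right 0. integrable lborel (F e) \<and> radially_nonincreasing (F e)"
    and f: "integrable lborel f" "radially_nonincreasing f"
    and z: "norm x < norm z" "c < f z"
  shows "\<forall>\<^sub>F e in at_right 0. c < F e x"
proof -
  define g :: "'a \<Rightarrow> real" where "g = shell_bump (norm x) (norm z)"
  define G where "G = integral\<^sup>L lborel g"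
  have G: "0 < G"
    unfolding G_def g_def using z by (intro integral_shell_bump_pos) auto
  have "c * G < f z * G"
    using z G by simp
  also have "\<dots> \<le> (\<integral>y. f y * g y \<partial>lborel)"
    unfolding G_def g_def using f z
    by (intro integral_mult_ge_on_support integrable_shell_bump integrable_mult_shell_bump
        shell_bump_nonneg) (auto dest: shell_bump_neq_zeroD simp: radially_nonincreasing_def)
  finally have "\<forall>\<^sub>F e in at_right 0. c * G < (\<integral>y. F e y * g y \<partial>lborel)"
    unfolding g_def by (rule order_tendstoD(1)[OF weak_conv_density_test_shell_bump[OF conv]])
  then show ?thesis
    using F
  proof eventually_elim
    case (elim e)
    have "(\<integral>y. F e y * g y \<partial>lborel) \<le> F e x * G"
      unfolding G_def g_def using elim(2)
      by (intro integral_mult_le_on_support integrable_shell_bump integrable_mult_shell_bump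
          shell_bump_nonneg) (auto dest: shell_bump_neq_zeroD simp: radially_nonincreasing_def)
    with elim(1) have "c * G < F e x * G"
      by linarith
    with G show ?case
      by simp
  qed
qed

lemma continuous_on_tendsto_along_ray:
  fixes f :: "'a::real_normed_vector \<Rightarrow> real"
  assumes "continuous_on UNIV f"
  shows "((\<lambda>t. f (t *\<^sub>R x)) \<longlongrightarrow> f x) (at 1)"
proof -
  have "continuous_on UNIV (\<lambda>t. f (t *\<^sub>R x))"
    by (rule continuous_on_compose2[OF assms]) (intro continuous_intros, simp)
  then have "isCont (\<lambda>t. f (t *\<^sub>R x)) 1"
    by (simp add: continuous_on_eq_continuous_at)
  then show ?thesis
    by (simp add: isCont_def)
qed

lemma ex_smaller_norm_value_less:
  fixes f :: "'a::real_normed_vector \<Rightarrow> real"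
  assumes "continuous_on UNIV f" "x \<noteq> 0" "f x < c"
  shows "\<exists>z. norm z < norm x \<and> f z < c"
proof -
  have "\<forall>\<^sub>F t in at_left 1. f (t *\<^sub>R x) < c"
    using order_tendstoD(2)[OF tendsto_mono[OF at_le[OF subset_UNIV]
          continuous_on_tendsto_along_ray[OF assms(1)]] assms(3)] .
  moreover have "\<forall>\<^sub>F t::real in at_left 1. t \<in> {0<..<1}"
    by (rule eventually_at_left_real) simp
  ultimately have "\<forall>\<^sub>F t in at_left 1. f (t *\<^sub>R x) < c \<and> t \<in> {0<..<1}"
    by (rule eventually_conj)
  then obtain t where "f (t *\<^sub>R x) < c" "t \<in> {0<..<1}"
    using eventually_happens by fastforce
  with assms(2) show ?thesis
    by (intro exI[of _ "t *\<^sub>R x"]) simp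
qed

lemma ex_larger_norm_value_greater:
  fixes f :: "'a::real_normed_vector \<Rightarrow> real"
  assumes "continuous_on UNIV f" "x \<noteq> 0" "c < f x"
  shows "\<exists>z. norm x < norm z \<and> c < f z"
proof -
  have "\<forall>\<^sub>F t in at_right 1. c < f (t *\<^sub>R x)"
    using order_tendstoD(1)[OF tendsto_mono[OF at_le[OF subset_UNIV]
          continuous_on_tendsto_along_ray[OF assms(1)]] assms(3)] .
  moreover have "\<forall>\<^sub>F t::real in at_right 1. t \<in> {1<..<2}"
    by (rule eventually_at_right_real) simp
  ultimately have "\<forall>\<^sub>F t in at_right 1. c < f (t *\<^sub>R x) \<and> t \<in> {1<..<2}"
    by (rule eventually_conj)
  then obtain t where "c < f (t *\<^sub>R x)" "t \<in> {1<..<2}"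
    using eventually_happens by fastforce
  with assms(2) show ?thesis
    by (intro exI[of _ "t *\<^sub>R x"]) simp
qed

theorem lemma2p6:
  fixes F :: "real \<Rightarrow> 'a::euclidean_space \<Rightarrow> real" and f :: "'a \<Rightarrow> real"
  assumes "\<And>e. e \<in> {0<..1} \<Longrightarrow> integrable lborel (F e)"
      and "\<And>e x. e \<in> {0<..1} \<Longrightarrow> F e x \<ge> 0"
      and "\<And>e. e \<in> {0<..1} \<Longrightarrow> continuous_on UNIV (F e)"
      and "\<And>e. e \<in> {0<..1} \<Longrightarrow> radial (F e)"
      and "\<And>e. e \<in> {0<..1} \<Longrightarrow> radially_nonincreasing (F e)"
      and "integrable lborel f"
      and "\<And>x. f x \<ge> 0"
      and "continuous_on UNIV f"
      and "radial f"
      and "radially_nonincreasing f"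
      and "weak_conv_density F f"
  shows "\<forall>x. x \<noteq> 0 \<longrightarrow> ((\<lambda>e. F e x) \<longlongrightarrow> f x) (at_right 0)"
proof (intro allI impI)
  fix x :: 'a
  assume "x \<noteq> 0"
  have F: "\<forall>\<^sub>F e in at_right 0. integrable lborel (F e) \<and> radially_nonincreasing (F e)"
    using eventually_at_right_real[OF zero_less_one] by eventually_elim (use assms(1,5) in auto)
  show "((\<lambda>e. F e x) \<longlongrightarrow> f x) (at_right 0)"
  proof (rule order_tendstoI)
    fix c
    assume "f x < c"
    then obtain z where "norm z < norm x" "f z < c"
      using ex_smaller_norm_value_less[OF assms(8) \<open>x \<noteq> 0\<close>] by blast
    then show "\<forall>\<^sub>F e in at_right 0. F e x < c"
      by (rule weak_conv_density_eventually_less[OF assms(11) F assms(6,10)])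
  next
    fix c
    assume "c < f x"
    then obtain z where "norm x < norm z" "c < f z"
      using ex_larger_norm_value_greater[OF assms(8) \<open>x \<noteq> 0\<close>] by blast
    then show "\<forall>\<^sub>F e in at_right 0. c < F e x"
      by (rule weak_conv_density_eventually_greater[OF assms(11) F assms(6,10)])
  qed
qed

end
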